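(* Let $d\ge 2$ and $m\in\mathbb{N}$ with $m\ge 2$, and put $N=m^d$. Then jittered sampling with $N$ points does not minimize the mean ${\mathcal L}_2$-discrepancy among stratified samples from convex equivolume partitions of $[0,1]^d$ into $N$ sets. That is, there exists a convex equivolume partition $\tilde{\mathbf\Omega}=(\tilde\Omega_1,\ldots,\tilde\Omega_N)$ of $[0,1]^d$ such that \[ \mathbb{E}\,{\mathcal L}_2^2({\mathcal P}_{\tilde{\mathbf\Omega}})<\mathbb{E}\,{\mathcal L}_2^2({\mathcal P}_{\mathrm{jit}}), \] where ${\mathcal P}_{\mathrm{jit}}$ is the stratified sample of the jittered partition.
   Context: A partition $\mathbf\Omega=(\Omega_1,\ldots,\Omega_N)$ of a compact convex set $K\subset\mathbb{R}^d$ with $|K|>0$ is a tuple of measurable sets of positive Lebesgue measure with $\Omega_1\cup\cdots\cup\Omega_N=K$ such that two different sets have no interior points in common. It is equivolume if $|\Omega_1|=\cdots=|\Omega_N|$, and convex if every $\Omega_i$ is convex. The stratified sample ${\mathcal P}_{\mathbf\Omega}=\{X_1,\ldots,X_N\}$ consists of independent random points with $X_i$ uniformly distributed in $\Omega_i$. For $K=[0,1]^d$ and a set ${\mathcal P}$ of $N$ points in $[0,1]^d$, the discrepancy function is $d_{\mathcal P}(\mathbf x)=\frac{\#({\mathcal P}\cap[\mathbf 0,\mathbf x])}{N}-\prod_{k=1}^d x_k$ for $\mathbf x\in[0,1]^d$, where $[\mathbf 0,\mathbf x]=\prod_{k=1}^d[0,x_k]$. The ${\mathcal L}_2$-discrepancy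 is ${\mathcal L}_2({\mathcal P})=\big(\int_{[0,1]^d}d_{\mathcal P}(\mathbf x)^2\,\mathrm d\mathbf x\big)^{1/2}$, and $\mathbb{E}\,{\mathcal L}_2^2$ is its mean square over the randomness of the sample. The jittered partition of $[0,1]^d$ with $N=m^d$ sets consists of the $m^d$ closed cubes $\prod_{k=1}^d[(j_k-1)/m,\,j_k/m]$ with $j_k\in\{1,\ldots,m\}$. *)

theory Defs
  imports "HOL-Probability.Probability"
begin

text \<open>Points of [0,1]^d are modelled as vectors in real^'n with d = CARD('n).
  A partition is indexed by a finite index set I.\<close>

definition is_partition :: "'i set \<Rightarrow> ('i \<Rightarrow> (real^'n) set) \<Rightarrow> (real^'n) set \<Rightarrow> bool" where
  "is_partition I \<Omega> K \<longleftrightarrow>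
     finite I \<and> I \<noteq> {} \<and>
     (\<forall>i\<in>I. \<Omega> i \<in> sets lebesgue \<and> emeasure lebesgue (\<Omega> i) > 0) \<and>
     (\<Union>i\<in>I. \<Omega> i) = K \<and>
     (\<forall>i\<in>I. \<forall>j\<in>I. i \<noteq> j \<longrightarrow> interior (\<Omega> i) \<inter> interior (\<Omega> j) = {})"

definition is_equivolume :: "'i set \<Rightarrow> ('i \<Rightarrow> (real^'n) set) \<Rightarrow> bool" where
  "is_equivolume I \<Omega> \<longleftrightarrow> (\<forall>i\<in>I. \<forall>j\<in>I. measure lebesgue (\<Omega> i) = measure lebesgue (\<Omega> j))"

definition is_convex_partition :: "'i set \<Rightarrow> ('i \<Rightarrow> (real^'n) set) \<Rightarrow> bool" where
  "is_convex_partition I \<Omega> \<longleftrightarrow> (\<forall>i\<in>I. convex (\<Omega> i))"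

definition discrepancy_fun :: "'i set \<Rightarrow> ('i \<Rightarrow> real^'n) \<Rightarrow> real^'n \<Rightarrow> real" where
  "discrepancy_fun I X x =
     real (card {i\<in>I. X i \<in> cbox 0 x}) / real (card I) - (\<Prod>k\<in>UNIV. x $ k)"

definition L2_disc_sq :: "'i set \<Rightarrow> ('i \<Rightarrow> real^'n) \<Rightarrow> real" where
  "L2_disc_sq I X = (\<integral>x. (discrepancy_fun I X x)\<^sup>2 \<partial>(lebesgue_on (cbox 0 1)))"

definition stratified_law :: "'i set \<Rightarrow> ('i \<Rightarrow> (real^'n) set) \<Rightarrow> ('i \<Rightarrow> real^'n) measure" where
  "stratified_law I \<Omega> = PiM I (\<lambda>i. uniform_measure lebesgue (\<Omega> i))"

definition mean_L2_disc_sq :: "'i set \<Rightarrow> ('i \<Rightarrow> (real^'n) set) \<Rightarrow> real" where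
  "mean_L2_disc_sq I \<Omega> = (\<integral>X. L2_disc_sq I X \<partial>(stratified_law I \<Omega>))"

definition jitter_index :: "nat \<Rightarrow> ('n::finite \<Rightarrow> nat) set" where
  "jitter_index m = PiE UNIV (\<lambda>_. {1..m})"

definition jittered :: "nat \<Rightarrow> ('n::finite \<Rightarrow> nat) \<Rightarrow> (real^'n) set" where
  "jittered m j = cbox (\<chi> k. (real (j k) - 1) / real m) (\<chi> k. real (j k) / real m)"

end

theory Submission
  imports Defs
begin

text \<open>Given the sample, the indicators of \<open>X\<^sub>i \<in> [0, x]\<close> are independent Bernoulli variables
  with means \<open>p\<^sub>i(x) = |\<Omega>\<^sub>i \<inter> [0, x]| / |\<Omega>\<^sub>i|\<close>. For a convex equivolume partition these means
  add up to \<open>N x\<^sub>1 \<dots> x\<^sub>d\<close>, so the discrepancy at x is centred and has variance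
  \<open>\<Sigma>\<^sub>i p\<^sub>i(x) (1 - p\<^sub>i(x)) / N\<^sup>2\<close>. Integrating over x gives
  \<open>E L\<^sub>2\<^sup>2 = (\<integral> x\<^sub>1 \<dots> x\<^sub>d) / N - (\<Sigma>\<^sub>i \<integral> p\<^sub>i\<^sup>2) / N\<^sup>2\<close>.
  For a box \<open>\<Pi>\<^sub>k [a\<^sub>k, b\<^sub>k]\<close> the function \<open>p\<^sub>i\<close> factorises and
  \<open>\<integral> p\<^sub>i\<^sup>2 = \<Pi>\<^sub>k (1 - a\<^sub>k - 2 (b\<^sub>k - a\<^sub>k) / 3)\<close>, so among partitions into boxes of
  volume \<open>1/N\<close> a larger \<open>\<Sigma>\<^sub>i \<integral> p\<^sub>i\<^sup>2\<close> means a smaller mean square discrepancy.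
  Recutting the four jittered cubes in one corner of a coordinate plane into four other boxes of the
  same volume increases this sum by \<open>(1 - 2/(3m))^(d-2) (3m - 4) / (36 m\<^sup>2) > 0\<close>.\<close>

section \<open>Integrals over the unit cube\<close>

definition interval_cdf :: "real \<Rightarrow> real \<Rightarrow> real \<Rightarrow> real" where
  "interval_cdf a b t = max 0 (min b t - a) / (b - a)"

definition cdf_sq_integral :: "real \<Rightarrow> real \<Rightarrow> real" where
  "cdf_sq_integral a b = 1 - a - 2 * (b - a) / 3"

lemma interval_cdf_nonneg: "a < b \<Longrightarrow> 0 \<le> interval_cdf a b t"
  by (simp add: interval_cdf_def)

lemma interval_cdf_le_1: "a < b \<Longrightarrow> interval_cdf a b t \<le> 1"
  by (simp add: interval_cdf_def divide_le_eq_1)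

lemma borel_measurable_interval_cdf[measurable]: "interval_cdf a b \<in> borel_measurable borel"
  unfolding interval_cdf_def[abs_def] by measurable

lemma interval_cdf_sq_has_integral:
  assumes "0 \<le> a" "a < b" "b \<le> 1"
  shows "((\<lambda>t. (interval_cdf a b t)\<^sup>2) has_integral cdf_sq_integral a b) {0..1}"
proof -
  have below: "((\<lambda>t. (interval_cdf a b t)\<^sup>2) has_integral 0) {0..a}"
    by (rule has_integral_eq[rotated, OF has_integral_0]) (auto simp: interval_cdf_def)
  define c where "c = 1 / (3 * (b - a)^2)"
  have deriv: "((\<lambda>t. (t - a)^3 * c) has_vector_derivative ((t - a) / (b - a))\<^sup>2) (at t within {a..b})"
    for t
  proof -
    have "((\<lambda>t. (t - a)^3 * c) has_real_derivative (3 * (t - a)^2 * c)) (at t within {a..b})"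
      by (auto intro!: derivative_eq_intros simp: eval_nat_numeral)
    moreover have "3 * (t - a)^2 * c = ((t - a) / (b - a))\<^sup>2"
      using assms by (simp add: power_divide c_def)
    ultimately show ?thesis by (simp add: has_real_derivative_iff_has_vector_derivative)
  qed
  have "((\<lambda>t. ((t - a) / (b - a))\<^sup>2) has_integral ((b - a)^3 * c - (a - a)^3 * c)) {a..b}"
    using assms by (intro fundamental_theorem_of_calculus deriv) auto
  moreover have "(b - a)^3 * c - (a - a)^3 * c = (b - a) / 3"
    using assms by (simp add: c_def power2_eq_square power3_eq_cube)
  ultimately have "((\<lambda>t. ((t - a) / (b - a))\<^sup>2) has_integral ((b - a) / 3)) {a..b}"
    by (simp only:)
  then have inside: "((\<lambda>t. (interval_cdf a b t)\<^sup>2) has_integral ((b - a) / 3)) {a..b}"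
    by (rule has_integral_eq[rotated]) (auto simp: interval_cdf_def)
  have "((\<lambda>t. 1::real) has_integral (1 - b)) {b..1}"
    using has_integral_const_real[of "1::real" b 1] assms by simp
  then have above: "((\<lambda>t. (interval_cdf a b t)\<^sup>2) has_integral (1 - b)) {b..1}"
    by (rule has_integral_eq[rotated]) (use assms in \<open>auto simp: interval_cdf_def\<close>)
  have "((\<lambda>t. (interval_cdf a b t)\<^sup>2) has_integral (0 + (b - a) / 3)) {0..b}"
    using assms by (intro has_integral_combine[OF _ _ below inside]) auto
  then have "((\<lambda>t. (interval_cdf a b t)\<^sup>2) has_integral (0 + (b - a) / 3 + (1 - b))) {0..1}"
    using assms by (intro has_integral_combine[OF _ _ _ above]) auto
  then show ?thesis by (simp add: cdf_sq_integral_def field_simps)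
qed

lemma Basis_vec_eq_range_axis: "(Basis :: (real^'n) set) = range (\<lambda>k. axis k 1)"
  by (auto simp: Basis_vec_def)

lemma inj_axis_1: "inj (\<lambda>k::'n::finite. axis k (1::real))"
  by (auto simp: inj_def axis_eq_axis)

lemma sum_Basis_scaleR_nth:
  fixes f :: "real^'n::finite \<Rightarrow> real"
  shows "(\<Sum>b\<in>Basis. f b *\<^sub>R b) $ k = f (axis k 1)"
proof -
  have "(\<Sum>b\<in>Basis. f b *\<^sub>R b) $ k = (\<Sum>i\<in>UNIV. f (axis i 1) * (axis i (1::real) $ k))"
    unfolding Basis_vec_eq_range_axis
    by (simp add: sum_component sum.reindex[OF inj_axis_1] o_def)
  also have "\<dots> = f (axis k 1)"
    by (simp add: axis_def if_distrib cong: if_cong)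
  finally show ?thesis .
qed

lemma lborel_integral_prod_nth:
  fixes h :: "'n::finite \<Rightarrow> real \<Rightarrow> real"
  assumes int: "\<And>k. integrable lborel (h k)"
  shows "(\<integral>x. (\<Prod>k\<in>UNIV. h k (x $ k)) \<partial>(lborel :: (real^'n) measure)) = (\<Prod>k\<in>UNIV. \<integral>t. h k t \<partial>lborel)"
proof -
  interpret product_sigma_finite "\<lambda>_::real^'n. lborel :: real measure"
    by standard
  define H where "H = (\<lambda>b::real^'n. h (inv (\<lambda>k. axis k (1::real)) b))"
  have H: "H (axis k 1) = h k" for k
    unfolding H_def by (simp add: inv_f_f[OF inj_axis_1])
  have meas: "(\<lambda>x::real^'n. \<Prod>k\<in>UNIV. h k (x $ k)) \<in> borel_measurable borel"
    using int by measurable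
  have "(\<integral>x. (\<Prod>k\<in>UNIV. h k (x $ k)) \<partial>(lborel :: (real^'n) measure))
      = (\<integral>f. (\<Prod>k\<in>UNIV. h k ((\<Sum>b\<in>Basis. f b *\<^sub>R b) $ k)) \<partial>(\<Pi>\<^sub>M b\<in>Basis. lborel))"
    by (subst lborel_eq) (subst integral_distr, auto intro: meas)
  also have "\<dots> = (\<integral>f. (\<Prod>b\<in>Basis. H b (f b)) \<partial>(\<Pi>\<^sub>M b\<in>Basis. lborel))"
  proof (rule Bochner_Integration.integral_cong[OF refl])
    fix f :: "real^'n \<Rightarrow> real"
    have "(\<Prod>b\<in>Basis. H b (f b)) = (\<Prod>k\<in>UNIV. H (axis k 1) (f (axis k 1)))"
      unfolding Basis_vec_eq_range_axis by (simp add: prod.reindex[OF inj_axis_1] o_def)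
    then show "(\<Prod>k\<in>UNIV. h k ((\<Sum>b\<in>Basis. f b *\<^sub>R b) $ k)) = (\<Prod>b\<in>Basis. H b (f b))"
      unfolding sum_Basis_scaleR_nth by (simp add: H)
  qed
  also have "\<dots> = (\<Prod>b\<in>Basis. \<integral>t. H b t \<partial>lborel)"
    by (rule product_integral_prod) (auto simp: Basis_vec_eq_range_axis H int)
  also have "\<dots> = (\<Prod>k\<in>UNIV. \<integral>t. h k t \<partial>lborel)"
    unfolding Basis_vec_eq_range_axis by (simp add: prod.reindex[OF inj_axis_1] o_def H)
  finally show ?thesis .
qed

lemma indicator_unit_cube_eq_prod:
  "indicator (cbox 0 (1::real^'n::finite)) x = (\<Prod>k\<in>UNIV. indicator {0..1::real} (x $ k) :: real)"
proof (cases "x \<in> cbox 0 1")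
  case False
  then obtain i where "x $ i \<notin> {0..1}" by (auto simp: mem_box_cart)
  then have "(\<Prod>k\<in>UNIV. indicator {0..1::real} (x $ k)) = (0::real)"
    by (subst prod_zero_iff) (auto intro!: exI[of _ i])
  with False show ?thesis by simp
qed (simp add: mem_box_cart)

lemma integral_unit_cube_prod:
  fixes g :: "'n::finite \<Rightarrow> real \<Rightarrow> real"
  assumes meas: "\<And>k. g k \<in> borel_measurable borel"
    and nonneg: "\<And>k t. 0 \<le> g k t"
    and has_int: "\<And>k. (g k has_integral I k) {0..1}"
  shows "(\<integral>x. (\<Prod>k\<in>UNIV. g k (x$k)) \<partial>lebesgue_on (cbox 0 (1::real^'n))) = (\<Prod>k\<in>UNIV. I k)"
proof -
  define h where "h = (\<lambda>k t. indicator {0..1::real} t * g k t)"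
  have h_meas: "h k \<in> borel_measurable borel" for k
    unfolding h_def using meas by measurable
  have set_int: "set_integrable lebesgue {0..1} (g k)" for k
    using has_int nonneg by (intro nonnegative_absolutely_integrable_1) (auto simp: integrable_on_def)
  have h_int: "integrable lborel (h k)" for k
    using set_int[of k] h_meas[of k] by (simp add: set_integrable_def h_def integrable_completion)
  have h_integral: "(\<integral>t. h k t \<partial>lborel) = I k" for k
  proof -
    have "(\<integral>t. h k t \<partial>lborel) = (LINT t:{0..1}|lebesgue. g k t)"
      using h_meas[of k] by (simp add: integral_completion set_lebesgue_integral_def h_def)
    also have "\<dots> = integral {0..1} (g k)"
      using set_int[of k] by (rule set_lebesgue_integral_eq_integral)
    finally show ?thesis using has_int[of k] by (simp add: integral_unique)
  qed
  have F_meas: "(\<lambda>x::real^'n. indicator (cbox 0 1) x *\<^sub>R (\<Prod>k\<in>UNIV. g k (x$k))) \<in> borel_measurable borel"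
    using meas by measurable
  have "(\<integral>x. (\<Prod>k\<in>UNIV. g k (x$k)) \<partial>lebesgue_on (cbox 0 (1::real^'n)))
      = (\<integral>x. indicator (cbox 0 1) x *\<^sub>R (\<Prod>k\<in>UNIV. g k (x$k)) \<partial>lborel)"
    using F_meas by (simp add: integral_restrict_space integral_completion)
  also have "\<dots> = (\<integral>x. (\<Prod>k\<in>UNIV. h k (x $ k)) \<partial>lborel)"
    by (simp add: indicator_unit_cube_eq_prod h_def prod.distrib)
  also have "\<dots> = (\<Prod>k\<in>UNIV. I k)"
    by (simp add: lborel_integral_prod_nth[OF h_int] h_integral)
  finally show ?thesis .
qed

section \<open>Mean square discrepancy of stratified samples\<close>

lemma vec_nth_borel_measurable[measurable]: "(\<lambda>x::real^'n::finite. x $ k) \<in> borel_measurable borel"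
  by (intro borel_measurable_continuous_onI continuous_intros)

lemma vec_nth_lebesgue_measurable[measurable]: "(\<lambda>x::real^'n::finite. x $ k) \<in> borel_measurable lebesgue"
  by (rule measurable_completion) simp

lemma prod_nth_unit_cube:
  fixes x :: "real^'n::finite"
  assumes "x \<in> cbox 0 1"
  shows "0 \<le> (\<Prod>k\<in>UNIV. x $ k)" "(\<Prod>k\<in>UNIV. x $ k) \<le> 1"
  using assms by (auto simp: mem_box_cart intro!: prod_nonneg prod_le_1)

lemma (in prob_space) centered_indicator_moments:
  assumes "A \<in> events"
  shows "integrable M (\<lambda>y. indicator A y - prob A)"
    and "(\<integral>y. indicator A y - prob A \<partial>M) = 0"
    and "integrable M (\<lambda>y. (indicator A y - prob A) * (indicator A y - prob A))"
    and "(\<integral>y. (indicator A y - prob A) * (indicator A y - prob A) \<partial>M) = prob A * (1 - prob A)"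
proof -
  have sq: "(indicator A y - prob A) * (indicator A y - prob A) = indicator A y * (1 - 2 * prob A) + (prob A)\<^sup>2"
    for y :: 'a
    by (cases "y \<in> A") (simp_all add: power2_eq_square algebra_simps)
  show "integrable M (\<lambda>y. indicator A y - prob A)"
    using assms by (intro Bochner_Integration.integrable_diff integrable_real_indicator)
       (auto simp: less_top[symmetric])
  show "integrable M (\<lambda>y. (indicator A y - prob A) * (indicator A y - prob A))"
    using assms unfolding sq
    by (intro Bochner_Integration.integrable_add integrable_mult_left integrable_real_indicator)
       (auto simp: less_top[symmetric])
  have indicator_int: "integrable M (indicator A :: 'a \<Rightarrow> real)"
    using assms by (auto simp: less_top[symmetric])
  show "(\<integral>y. indicator A y - prob A \<partial>M) = 0"
    using indicator_int assms by (simp add: Bochner_Integration.integral_diff prob_space)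
  show "(\<integral>y. (indicator A y - prob A) * (indicator A y - prob A) \<partial>M) = prob A * (1 - prob A)"
    using indicator_int assms unfolding sq
    by (simp add: Bochner_Integration.integral_add prob_space power2_eq_square algebra_simps)
qed

lemma integral_PiM_mult_components:
  fixes M :: "'i \<Rightarrow> 'a measure" and f g :: "'a \<Rightarrow> real"
  assumes prob: "\<And>k. k \<in> I \<Longrightarrow> prob_space (M k)" and "finite I" "i \<in> I" "j \<in> I"
    and f: "integrable (M i) f" and g: "integrable (M j) g"
    and fg: "i = j \<Longrightarrow> integrable (M i) (\<lambda>y. f y * g y)"
  shows "integrable (PiM I M) (\<lambda>X. f (X i) * g (X j))"
    and "(\<integral>X. f (X i) * g (X j) \<partial>PiM I M) =
           (if i = j then \<integral>y. f y * g y \<partial>M i else (\<integral>y. f y \<partial>M i) * (\<integral>y. g y \<partial>M j))"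
proof -
  define M' where "M' k = (if k \<in> I then M k else M i)" for k
  have prob': "prob_space (M' k)" for k
    using prob \<open>i \<in> I\<close> by (simp add: M'_def)
  have PiM_eq: "PiM I M = PiM I M'"
    by (rule PiM_cong) (simp_all add: M'_def)
  interpret product_sigma_finite M'
    by (simp add: product_sigma_finite_def prob_space_imp_sigma_finite prob')
  define F where "F = (\<lambda>k y. (if k = i then f y else 1) * (if k = j then g y else 1))"
  have M'_eq: "M' i = M i" "M' j = M j"
    using \<open>j \<in> I\<close> by (simp_all add: M'_def)
  have F_int: "integrable (M' k) (F k)" for k
  proof -
    interpret prob_space "M' k" by (rule prob')
    show ?thesis
      using f g fg by (cases "k = i"; cases "k = j") (auto simp: F_def M'_eq)
  qed
  have F_integral: "(\<integral>y. F k y \<partial>M' k) =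
      (if k = i \<and> k = j then \<integral>y. f y * g y \<partial>M i
       else (if k = i then \<integral>y. f y \<partial>M i else 1) * (if k = j then \<integral>y. g y \<partial>M j else 1))" for k
  proof -
    interpret prob_space "M' k" by (rule prob')
    show ?thesis
      by (cases "k = i"; cases "k = j") (auto simp: F_def M'_eq prob_space)
  qed
  have F_prod: "(\<Prod>k\<in>I. F k (X k)) = f (X i) * g (X j)" for X
    using \<open>finite I\<close> \<open>i \<in> I\<close> \<open>j \<in> I\<close>
    by (simp add: F_def prod.distrib if_distrib[of "\<lambda>h. h (X _)"] cong: if_cong)
  show "integrable (PiM I M) (\<lambda>X. f (X i) * g (X j))"
    using product_integrable_prod[OF \<open>finite I\<close> F_int] by (simp add: F_prod PiM_eq)
  have "(\<integral>X. f (X i) * g (X j) \<partial>PiM I M) = (\<Prod>k\<in>I. \<integral>y. F k y \<partial>M' k)"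
    using product_integral_prod[OF \<open>finite I\<close> F_int] by (simp add: F_prod PiM_eq)
  also have "\<dots> = (if i = j then \<integral>y. f y * g y \<partial>M i else (\<integral>y. f y \<partial>M i) * (\<integral>y. g y \<partial>M j))"
  proof (cases "i = j")
    case True
    have "(\<Prod>k\<in>I. \<integral>y. F k y \<partial>M' k) = (\<Prod>k\<in>I. if k = i then \<integral>y. f y * g y \<partial>M i else 1)"
      using True by (intro prod.cong) (auto simp: F_integral)
    with True \<open>finite I\<close> \<open>i \<in> I\<close> show ?thesis by simp
  next
    case False
    have "(\<Prod>k\<in>I. \<integral>y. F k y \<partial>M' k) =
        (\<Prod>k\<in>I. (if k = i then \<integral>y. f y \<partial>M i else 1) * (if k = j then \<integral>y. g y \<partial>M j else 1))"
      using False by (intro prod.cong) (auto simp: F_integral)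
    with False \<open>finite I\<close> \<open>i \<in> I\<close> \<open>j \<in> I\<close> show ?thesis by (simp add: prod.distrib)
  qed
  finally show "(\<integral>X. f (X i) * g (X j) \<partial>PiM I M) =
           (if i = j then \<integral>y. f y * g y \<partial>M i else (\<integral>y. f y \<partial>M i) * (\<integral>y. g y \<partial>M j))" .
qed

definition admissible_strata :: "'i set \<Rightarrow> ('i \<Rightarrow> (real^'n) set) \<Rightarrow> bool" where
  "admissible_strata I \<Omega> \<longleftrightarrow> finite I \<and> I \<noteq> {} \<and>
     (\<forall>i\<in>I. emeasure lebesgue (\<Omega> i) \<noteq> 0 \<and> emeasure lebesgue (\<Omega> i) \<noteq> \<infinity>)"

definition stratum_cdf :: "('i \<Rightarrow> (real^'n::finite) set) \<Rightarrow> 'i \<Rightarrow> real^'n \<Rightarrow> real" where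
  "stratum_cdf \<Omega> i x = measure lebesgue (\<Omega> i \<inter> cbox 0 x) / measure lebesgue (\<Omega> i)"

lemma prob_space_uniform_stratum:
  "admissible_strata I \<Omega> \<Longrightarrow> i \<in> I \<Longrightarrow> prob_space (uniform_measure lebesgue (\<Omega> i))"
  by (simp add: admissible_strata_def prob_space_uniform_measure)

lemma prob_space_stratified_law: "admissible_strata I \<Omega> \<Longrightarrow> prob_space (stratified_law I \<Omega>)"
  unfolding stratified_law_def by (intro prob_space_PiM prob_space_uniform_stratum)

lemma measure_uniform_stratum_lower_box:
  "admissible_strata I \<Omega> \<Longrightarrow> i \<in> I \<Longrightarrow>
     measure (uniform_measure lebesgue (\<Omega> i)) (cbox 0 x) = stratum_cdf \<Omega> i x"
  by (simp add: admissible_strata_def stratum_cdf_def)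

lemma discrepancy_fun_eq_sum_indicator:
  fixes X :: "'i \<Rightarrow> real^'n::finite"
  assumes "finite I"
  shows "discrepancy_fun I X x =
           (\<Sum>i\<in>I. indicator (cbox 0 x) (X i)) / real (card I) - (\<Prod>k\<in>UNIV. x $ k)"
proof -
  have "real (card {i\<in>I. X i \<in> cbox 0 x}) = (\<Sum>i\<in>I. indicator (cbox 0 x) (X i))"
    using assms by (simp add: indicator_def sum.If_cases Int_def)
  then show ?thesis by (simp add: discrepancy_fun_def)
qed

lemma abs_discrepancy_fun_le_1:
  assumes "finite I" "I \<noteq> {}" "x \<in> cbox 0 1"
  shows "\<bar>discrepancy_fun I X x\<bar> \<le> 1"
proof -
  have "card {i\<in>I. X i \<in> cbox 0 x} \<le> card I"
    using assms by (intro card_mono) auto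
  then have "real (card {i\<in>I. X i \<in> cbox 0 x}) / real (card I) \<le> 1"
    using assms by (simp add: card_gt_0_iff)
  moreover have "0 \<le> real (card {i\<in>I. X i \<in> cbox 0 x}) / real (card I)"
    by simp
  ultimately show ?thesis
    using prod_nth_unit_cube[OF \<open>x \<in> cbox 0 1\<close>] unfolding discrepancy_fun_def by arith
qed

lemma borel_measurable_discrepancy_fun:
  fixes \<Omega> :: "'i \<Rightarrow> (real^'n::finite) set"
  assumes "finite I"
  shows "(\<lambda>(X, x). discrepancy_fun I X x) \<in> borel_measurable (stratified_law I \<Omega> \<Otimes>\<^sub>M lebesgue_on (cbox 0 1))"
proof -
  let ?M = "stratified_law I \<Omega> \<Otimes>\<^sub>M lebesgue_on (cbox 0 (1::real^'n))"
  have snd_nth[measurable]: "(\<lambda>p. snd p $ k) \<in> borel_measurable ?M" for k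
    using measurable_comp[OF measurable_snd measurable_restrict_space1[OF vec_nth_lebesgue_measurable]]
    by (simp add: o_def)
  have "(\<lambda>p. indicator (cbox 0 (snd p)) (fst p i) :: real) \<in> borel_measurable ?M" if "i \<in> I" for i
  proof -
    have component: "(\<lambda>X. X i) \<in> stratified_law I \<Omega> \<rightarrow>\<^sub>M uniform_measure lebesgue (\<Omega> i)"
      unfolding stratified_law_def using that by (rule measurable_component_singleton)
    have nth: "(\<lambda>y::real^'n. y $ k) \<in> borel_measurable (uniform_measure lebesgue (\<Omega> i))" for k
      by (subst measurable_cong_sets[OF sets_uniform_measure refl]) simp
    have [measurable]: "(\<lambda>p. fst p i $ k) \<in> borel_measurable ?M" for k
      using measurable_comp[OF measurable_comp[OF measurable_fst component] nth] by (simp add: o_def)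
    have "(\<lambda>p::('i \<Rightarrow> real^'n) \<times> (real^'n). indicator (cbox 0 (snd p)) (fst p i) :: real) =
        (\<lambda>p. if \<forall>k. 0 \<le> fst p i $ k \<and> fst p i $ k \<le> snd p $ k then 1 else 0)"
      by (auto simp: fun_eq_iff indicator_def mem_box_cart)
    then show ?thesis by simp
  qed
  then have [measurable]: "(\<lambda>p. \<Sum>i\<in>I. indicator (cbox 0 (snd p)) (fst p i) :: real) \<in> borel_measurable ?M"
    by (rule borel_measurable_sum)
  show ?thesis
    unfolding discrepancy_fun_eq_sum_indicator[OF assms, abs_def] case_prod_beta by measurable
qed

lemma integrable_sq_discrepancy_fun:
  assumes "admissible_strata I \<Omega>"
  shows "integrable (stratified_law I \<Omega> \<Otimes>\<^sub>M lebesgue_on (cbox 0 1))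
           (\<lambda>(X, x). (discrepancy_fun I X x)\<^sup>2)"
proof -
  let ?L = "lebesgue_on (cbox 0 (1::real^'n))"
  interpret P: prob_space "stratified_law I \<Omega>"
    using assms by (rule prob_space_stratified_law)
  interpret L: finite_measure ?L
    by (simp add: finite_measure_lebesgue_on)
  interpret PL: finite_measure "stratified_law I \<Omega> \<Otimes>\<^sub>M ?L"
    by (rule finite_measure_pair_measure) unfold_locales
  have "finite I" "I \<noteq> {}"
    using assms by (auto simp: admissible_strata_def)
  show ?thesis
  proof (rule PL.integrable_const_bound[where B=1])
    show "AE p in stratified_law I \<Omega> \<Otimes>\<^sub>M ?L. norm ((\<lambda>(X, x). (discrepancy_fun I X x)\<^sup>2) p) \<le> 1"
      using abs_discrepancy_fun_le_1[OF \<open>finite I\<close> \<open>I \<noteq> {}\<close>]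
      by (intro AE_I2) (auto simp: space_pair_measure abs_square_le_1)
    show "(\<lambda>(X, x). (discrepancy_fun I X x)\<^sup>2) \<in> borel_measurable (stratified_law I \<Omega> \<Otimes>\<^sub>M ?L)"
      using borel_measurable_discrepancy_fun[OF \<open>finite I\<close>, of \<Omega>] by measurable
  qed
qed

lemma integral_sq_discrepancy_fun_stratified:
  fixes \<Omega> :: "'i \<Rightarrow> (real^'n::finite) set"
  assumes adm: "admissible_strata I \<Omega>"
    and sum_cdf: "(\<Sum>i\<in>I. stratum_cdf \<Omega> i x) = real (card I) * (\<Prod>k\<in>UNIV. x$k)"
  shows "(\<integral>X. (discrepancy_fun I X x)\<^sup>2 \<partial>stratified_law I \<Omega>)
           = (\<Sum>i\<in>I. stratum_cdf \<Omega> i x * (1 - stratum_cdf \<Omega> i x)) / (real (card I))\<^sup>2"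
proof -
  define M where "M i = uniform_measure lebesgue (\<Omega> i)" for i
  define P where "P i = stratum_cdf \<Omega> i x" for i
  define Y where "Y = (\<lambda>i y. indicator (cbox 0 x) y - P i)"
  define N where "N = real (card I)"
  have "finite I" and "N > 0"
    using adm by (auto simp: admissible_strata_def N_def card_gt_0_iff)
  have prob: "prob_space (M i)" if "i \<in> I" for i
    unfolding M_def using adm that by (rule prob_space_uniform_stratum)
  have P: "P i = measure (M i) (cbox 0 x)" if "i \<in> I" for i
    unfolding M_def P_def using adm that by (rule measure_uniform_stratum_lower_box[symmetric])
  have moments: "integrable (M i) (Y i)" "(\<integral>y. Y i y \<partial>M i) = 0"
    "integrable (M i) (\<lambda>y. Y i y * Y i y)" "(\<integral>y. Y i y * Y i y \<partial>M i) = P i * (1 - P i)"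
    if "i \<in> I" for i
    using prob_space.centered_indicator_moments[OF prob[OF that], of "cbox 0 x"]
    unfolding Y_def P[OF that] by (simp_all add: M_def)
  have "(\<integral>X. Y i (X i) * Y j (X j) \<partial>PiM I M) = (if i = j then P i * (1 - P i) else 0)"
    and "integrable (PiM I M) (\<lambda>X. Y i (X i) * Y j (X j))"
    if "i \<in> I" "j \<in> I" for i j
  proof -
    have "integrable (M i) (\<lambda>y. Y i y * Y j y)" if "i = j"
      using moments(3) \<open>i \<in> I\<close> that by simp
    note pair = integral_PiM_mult_components[where M = M, OF prob \<open>finite I\<close> that
        moments(1)[OF \<open>i \<in> I\<close>] moments(1)[OF \<open>j \<in> I\<close>] this]
    show "(\<integral>X. Y i (X i) * Y j (X j) \<partial>PiM I M) = (if i = j then P i * (1 - P i) else 0)"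
      using pair(2) moments that by simp
    show "integrable (PiM I M) (\<lambda>X. Y i (X i) * Y j (X j))"
      using pair(1) by simp
  qed
  then have "(\<integral>X. (\<Sum>i\<in>I. \<Sum>j\<in>I. Y i (X i) * Y j (X j)) \<partial>PiM I M) = (\<Sum>i\<in>I. P i * (1 - P i))"
    using \<open>finite I\<close> by (simp add: Bochner_Integration.integral_sum Bochner_Integration.integrable_sum)
  moreover have "discrepancy_fun I X x = (\<Sum>i\<in>I. Y i (X i)) / N" for X
    using sum_cdf \<open>N > 0\<close>
    by (simp add: discrepancy_fun_eq_sum_indicator[OF \<open>finite I\<close>] Y_def P_def sum_subtractf
        N_def[symmetric] field_simps)
  ultimately show ?thesis
    by (simp add: stratified_law_def M_def[abs_def] power2_eq_square sum_product N_def P_def)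
qed

lemma mean_L2_disc_sq_eq_integral_variance:
  fixes \<Omega> :: "'i \<Rightarrow> (real^'n::finite) set"
  assumes adm: "admissible_strata I \<Omega>"
    and sum_cdf: "\<And>x. x \<in> cbox 0 1 \<Longrightarrow>
           (\<Sum>i\<in>I. stratum_cdf \<Omega> i x) = real (card I) * (\<Prod>k\<in>UNIV. x$k)"
  shows "mean_L2_disc_sq I \<Omega> =
           (\<integral>x. (\<Sum>i\<in>I. stratum_cdf \<Omega> i x * (1 - stratum_cdf \<Omega> i x)) / (real (card I))\<^sup>2
              \<partial>lebesgue_on (cbox 0 1))"
proof -
  let ?L = "lebesgue_on (cbox 0 (1::real^'n))"
  interpret P: prob_space "stratified_law I \<Omega>"
    using adm by (rule prob_space_stratified_law)
  interpret L: finite_measure ?L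
    by (simp add: finite_measure_lebesgue_on)
  interpret pair_sigma_finite "stratified_law I \<Omega>" ?L
    by unfold_locales
  have "mean_L2_disc_sq I \<Omega> = (\<integral>x. (\<integral>X. (discrepancy_fun I X x)\<^sup>2 \<partial>stratified_law I \<Omega>) \<partial>?L)"
    unfolding mean_L2_disc_sq_def L2_disc_sq_def
    using Fubini_integral[OF integrable_sq_discrepancy_fun[OF adm]] by simp
  also have "\<dots> = (\<integral>x. (\<Sum>i\<in>I. stratum_cdf \<Omega> i x * (1 - stratum_cdf \<Omega> i x)) / (real (card I))\<^sup>2 \<partial>?L)"
    using integral_sq_discrepancy_fun_stratified[OF adm sum_cdf]
    by (intro Bochner_Integration.integral_cong) auto
  finally show ?thesis .
qed

lemma measure_lebesgue_cbox_cart: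
  fixes a b :: "real^'n::finite"
  shows "measure lebesgue (cbox a b) = (if \<forall>k. a$k \<le> b$k then \<Prod>k\<in>UNIV. b$k - a$k else 0)"
  using interval_ne_empty_cart(1)[of a b] by (auto simp: measure_completion content_cbox_if_cart)

lemma sum_measure_Int_convex_partition:
  fixes \<Omega> :: "'i \<Rightarrow> (real^'n::finite) set"
  assumes "finite I"
    and meas: "\<And>i. i \<in> I \<Longrightarrow> \<Omega> i \<in> lmeasurable"
    and conv: "\<And>i. i \<in> I \<Longrightarrow> convex (\<Omega> i)"
    and disj: "\<And>i j. i \<in> I \<Longrightarrow> j \<in> I \<Longrightarrow> i \<noteq> j \<Longrightarrow> interior (\<Omega> i) \<inter> interior (\<Omega> j) = {}"
    and "S \<in> sets lebesgue"
  shows "(\<Sum>i\<in>I. measure lebesgue (\<Omega> i \<inter> S)) = measure lebesgue ((\<Union>i\<in>I. \<Omega> i) \<inter> S)"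
proof -
  have "negligible ((\<Omega> i \<inter> S) \<inter> (\<Omega> j \<inter> S))" if "i \<in> I" "j \<in> I" "i \<noteq> j" for i j
  proof (rule negligible_subset)
    show "negligible (frontier (\<Omega> i) \<union> frontier (\<Omega> j))"
      using conv that by (intro negligible_Un negligible_convex_frontier) auto
    have "\<Omega> i \<inter> \<Omega> j \<subseteq> (\<Omega> i - interior (\<Omega> i)) \<union> (\<Omega> j - interior (\<Omega> j))"
      using disj[OF that] by blast
    then show "(\<Omega> i \<inter> S) \<inter> (\<Omega> j \<inter> S) \<subseteq> frontier (\<Omega> i) \<union> frontier (\<Omega> j)"
      using closure_subset[of "\<Omega> i"] closure_subset[of "\<Omega> j"] by (auto simp: frontier_def)
  qed
  then have "measure lebesgue (\<Union>i\<in>I. \<Omega> i \<inter> S) = (\<Sum>i\<in>I. measure lebesgue (\<Omega> i \<inter> S))"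
    using \<open>finite I\<close> meas \<open>S \<in> sets lebesgue\<close>
    by (intro measure_negligible_finite_Union_image) (auto simp: pairwise_def intro: fmeasurable_Int_fmeasurable)
  then show ?thesis
    by (simp add: Int_UN_distrib2)
qed

lemma measure_Int_eq_0_if_sum_measure_le:
  fixes A :: "'i \<Rightarrow> (real^'n::finite) set"
  assumes "finite I" and meas: "\<And>i. i \<in> I \<Longrightarrow> A i \<in> lmeasurable"
    and le: "(\<Sum>i\<in>I. measure lebesgue (A i)) \<le> measure lebesgue (\<Union>i\<in>I. A i)"
    and "i \<in> I" "j \<in> I" "i \<noteq> j"
  shows "measure lebesgue (A i \<inter> A j) = 0"
proof -
  define R where "R = I - {i, j}"
  have I: "I = insert i (insert j R)" and "finite R" "i \<notin> R" "j \<notin> R"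
    using assms by (auto simp: R_def)
  have "(\<Union>i\<in>I. A i) = (A i \<union> A j) \<union> (\<Union>k\<in>R. A k)"
    unfolding I by auto
  then have "measure lebesgue (\<Union>i\<in>I. A i) \<le> measure lebesgue (A i \<union> A j) + measure lebesgue (\<Union>k\<in>R. A k)"
    using meas \<open>finite R\<close> unfolding I by (auto intro!: measure_Un_le sets.finite_UN)
  also have "measure lebesgue (\<Union>k\<in>R. A k) \<le> (\<Sum>k\<in>R. measure lebesgue (A k))"
    using meas \<open>finite R\<close> unfolding I by (intro measure_UNION_le) auto
  also have "measure lebesgue (A i \<union> A j) =
      measure lebesgue (A i) + measure lebesgue (A j) - measure lebesgue (A i \<inter> A j)"
    using meas assms by (intro measure_Un3) auto
  finally have "measure lebesgue (A i \<inter> A j) \<le> 0"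
    using le \<open>finite R\<close> \<open>i \<notin> R\<close> \<open>j \<notin> R\<close> \<open>i \<noteq> j\<close> unfolding I by simp
  then show ?thesis
    by (simp add: measure_le_0_iff)
qed

lemma lmeasurable_partition_unit_cube:
  "is_partition I \<Omega> (cbox 0 (1::real^'n::finite)) \<Longrightarrow> i \<in> I \<Longrightarrow> \<Omega> i \<in> lmeasurable"
  unfolding is_partition_def
  by (intro bounded_set_imp_lmeasurable bounded_subset[OF bounded_cbox]) auto

lemma admissible_strata_partition_unit_cube:
  assumes "is_partition I \<Omega> (cbox 0 (1::real^'n::finite))"
  shows "admissible_strata I \<Omega>"
proof -
  have "emeasure lebesgue (\<Omega> i) \<noteq> \<infinity>" if "i \<in> I" for i
    using lmeasurable_partition_unit_cube[OF assms that] by (simp add: emeasure_eq_measure2)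
  with assms show ?thesis
    unfolding is_partition_def admissible_strata_def by (metis not_gr_zero)
qed

lemma sum_measure_Int_convex_partition_unit_cube:
  fixes \<Omega> :: "'i \<Rightarrow> (real^'n::finite) set"
  assumes part: "is_partition I \<Omega> (cbox 0 1)" and conv: "is_convex_partition I \<Omega>"
    and "S \<in> sets lebesgue"
  shows "(\<Sum>i\<in>I. measure lebesgue (\<Omega> i \<inter> S)) = measure lebesgue (cbox 0 1 \<inter> S)"
proof -
  have "finite I" and cover: "(\<Union>i\<in>I. \<Omega> i) = cbox 0 1"
    and disj: "\<forall>i\<in>I. \<forall>j\<in>I. i \<noteq> j \<longrightarrow> interior (\<Omega> i) \<inter> interior (\<Omega> j) = {}"
    using part by (simp_all add: is_partition_def)
  have "(\<Sum>i\<in>I. measure lebesgue (\<Omega> i \<inter> S)) = measure lebesgue ((\<Union>i\<in>I. \<Omega> i) \<inter> S)"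
    using conv disj \<open>S \<in> sets lebesgue\<close> unfolding is_convex_partition_def
    by (intro sum_measure_Int_convex_partition \<open>finite I\<close> lmeasurable_partition_unit_cube[OF part])
      simp_all
  then show ?thesis
    by (simp only: cover)
qed

lemma measure_convex_equivolume_partition:
  fixes \<Omega> :: "'i \<Rightarrow> (real^'n::finite) set"
  assumes part: "is_partition I \<Omega> (cbox 0 1)" and equi: "is_equivolume I \<Omega>"
    and conv: "is_convex_partition I \<Omega>" and "i \<in> I"
  shows "measure lebesgue (\<Omega> i) = 1 / real (card I)"
proof -
  have "(\<Sum>j\<in>I. measure lebesgue (\<Omega> i)) = (\<Sum>j\<in>I. measure lebesgue (\<Omega> j \<inter> UNIV))"
    using equi \<open>i \<in> I\<close> unfolding is_equivolume_def by (intro sum.cong refl) (metis Int_UNIV_right)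
  also have "\<dots> = 1"
    using sum_measure_Int_convex_partition_unit_cube[OF part conv, of UNIV]
    by (simp add: measure_lebesgue_cbox_cart)
  finally have eq: "real (card I) * measure lebesgue (\<Omega> i) = 1"
    by simp
  then have "real (card I) \<noteq> 0"
    by (metis mult_zero_left zero_neq_one)
  with eq show ?thesis
    by (simp add: field_simps)
qed

lemma sum_stratum_cdf_convex_equivolume:
  fixes \<Omega> :: "'i \<Rightarrow> (real^'n::finite) set"
  assumes part: "is_partition I \<Omega> (cbox 0 1)" and equi: "is_equivolume I \<Omega>"
    and conv: "is_convex_partition I \<Omega>" and x: "x \<in> cbox 0 1"
  shows "(\<Sum>i\<in>I. stratum_cdf \<Omega> i x) = real (card I) * (\<Prod>k\<in>UNIV. x$k)"
proof -
  have "cbox 0 x \<subseteq> cbox 0 (1::real^'n)"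
    using x by (auto simp: mem_box_cart) (meson order_trans)
  then have "(\<Sum>i\<in>I. measure lebesgue (\<Omega> i \<inter> cbox 0 x)) = (\<Prod>k\<in>UNIV. x$k)"
    using x sum_measure_Int_convex_partition_unit_cube[OF part conv, of "cbox 0 x"]
    by (simp add: Int_absorb1 measure_lebesgue_cbox_cart mem_box_cart)
  moreover have "(\<Sum>i\<in>I. stratum_cdf \<Omega> i x) = (\<Sum>i\<in>I. real (card I) * measure lebesgue (\<Omega> i \<inter> cbox 0 x))"
    using measure_convex_equivolume_partition[OF part equi conv] by (simp add: stratum_cdf_def mult.commute)
  ultimately show ?thesis
    by (simp flip: sum_distrib_left)
qed

lemma mean_L2_disc_sq_convex_equivolume:
  fixes \<Omega> :: "'i \<Rightarrow> (real^'n::finite) set"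
  assumes "is_partition I \<Omega> (cbox 0 1)" "is_equivolume I \<Omega>" "is_convex_partition I \<Omega>"
  shows "mean_L2_disc_sq I \<Omega> =
           (\<integral>x. (\<Sum>i\<in>I. stratum_cdf \<Omega> i x * (1 - stratum_cdf \<Omega> i x)) / (real (card I))\<^sup>2
              \<partial>lebesgue_on (cbox 0 1))"
  using assms
  by (intro mean_L2_disc_sq_eq_integral_variance admissible_strata_partition_unit_cube
      sum_stratum_cdf_convex_equivolume)

section \<open>Partitions into boxes of equal volume\<close>

lemma measure_lebesgue_cbox_cart_max:
  fixes a b :: "real^'n::finite"
  shows "measure lebesgue (cbox a b) = (\<Prod>k\<in>UNIV. max 0 (b$k - a$k))"
proof (cases "\<forall>k. a$k \<le> b$k")
  case False
  then obtain k where "b$k < a$k"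
    by (auto simp: not_le)
  then have "(\<Prod>k\<in>UNIV. max 0 (b$k - a$k)) = 0"
    by (subst prod_zero_iff) (auto intro!: exI[of _ k])
  with False show ?thesis
    by (simp add: measure_lebesgue_cbox_cart)
qed (simp add: measure_lebesgue_cbox_cart)

lemma stratum_cdf_cbox:
  assumes "\<And>k. 0 \<le> lo i $ k \<and> lo i $ k < hi i $ k"
  shows "stratum_cdf (\<lambda>i. cbox (lo i) (hi i)) i x = (\<Prod>k\<in>UNIV. interval_cdf (lo i $ k) (hi i $ k) (x$k))"
proof -
  have "cbox (lo i) (hi i) \<inter> cbox 0 x = cbox (lo i) (\<chi> k. min (hi i $ k) (x$k))"
    unfolding Int_interval_cart interval_cbox_cart using assms by (simp add: max_absorb1)
  then show ?thesis
    using assms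
    by (simp add: stratum_cdf_def interval_cdf_def measure_lebesgue_cbox_cart_max prod_dividef
        max_absorb2 less_imp_le)
qed

definition box_cdf_sq_integral :: "real^'n::finite \<Rightarrow> real^'n \<Rightarrow> real" where
  "box_cdf_sq_integral lo hi = (\<Prod>k\<in>UNIV. cdf_sq_integral (lo$k) (hi$k))"

lemma integral_sq_prod_interval_cdf:
  fixes u v :: "real^'n::finite"
  assumes "\<And>k. 0 \<le> u$k \<and> u$k < v$k \<and> v$k \<le> 1"
  shows "(\<integral>x. (\<Prod>k\<in>UNIV. interval_cdf (u$k) (v$k) (x$k))\<^sup>2 \<partial>lebesgue_on (cbox 0 1)) =
           box_cdf_sq_integral u v"
  unfolding box_cdf_sq_integral_def prod_power_distrib
  using assms by (intro integral_unit_cube_prod interval_cdf_sq_has_integral) auto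

definition equal_box_partition :: "'i set \<Rightarrow> ('i \<Rightarrow> real^'n::finite) \<Rightarrow> ('i \<Rightarrow> real^'n) \<Rightarrow> bool" where
  "equal_box_partition I lo hi \<longleftrightarrow> finite I \<and>
     (\<forall>i\<in>I. \<forall>k. 0 \<le> lo i $ k \<and> lo i $ k < hi i $ k \<and> hi i $ k \<le> 1) \<and>
     (\<forall>i\<in>I. (\<Prod>k\<in>UNIV. hi i $ k - lo i $ k) = 1 / real (card I)) \<and>
     (\<Union>i\<in>I. cbox (lo i) (hi i)) = cbox 0 1"

lemma equal_box_partition_reindex:
  assumes "equal_box_partition I lo hi" "bij_betw e J I"
  shows "equal_box_partition J (lo \<circ> e) (hi \<circ> e)"
proof -
  have "card J = card I" "finite J" "e ` J = I"
    using assms by (auto simp: bij_betw_same_card bij_betw_finite equal_box_partition_def bij_betw_def)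
  then show ?thesis
    using assms(1) unfolding equal_box_partition_def by auto
qed

lemma interior_Int_interior_eq_empty_if_negligible:
  fixes S T :: "'a::euclidean_space set"
  assumes "negligible (S \<inter> T)"
  shows "interior S \<inter> interior T = {}"
proof -
  have "negligible (interior S \<inter> interior T)"
    using assms by (rule negligible_subset) (auto dest: interior_subset[THEN subsetD])
  then show ?thesis
    using open_not_negligible[of "interior S \<inter> interior T"] by auto
qed

lemma equal_box_partitionD:
  assumes "equal_box_partition I lo hi"
  shows "is_partition I (\<lambda>i. cbox (lo i) (hi i)) (cbox 0 1)"
    and "is_equivolume I (\<lambda>i. cbox (lo i) (hi i))"
    and "is_convex_partition I (\<lambda>i. cbox (lo i) (hi i))"
proof -
  have "finite I" and box: "\<And>i k. i \<in> I \<Longrightarrow> lo i $ k < hi i $ k"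
    and vol: "\<And>i. i \<in> I \<Longrightarrow> (\<Prod>k\<in>UNIV. hi i $ k - lo i $ k) = 1 / real (card I)"
    and cover: "(\<Union>i\<in>I. cbox (lo i) (hi i)) = cbox 0 1"
    using assms by (auto simp: equal_box_partition_def)
  have measure_box: "measure lebesgue (cbox (lo i) (hi i)) = 1 / real (card I)" if "i \<in> I" for i
    using box[OF that] vol[OF that] by (simp add: measure_lebesgue_cbox_cart less_imp_le)
  have "(0::real^'n) \<in> cbox 0 1"
    by (simp add: mem_box_cart)
  then have "I \<noteq> {}"
    using cover by auto
  then have "card I > 0"
    using \<open>finite I\<close> by (simp add: card_gt_0_iff)
  have "(\<Sum>i\<in>I. measure lebesgue (cbox (lo i) (hi i))) = (\<Sum>i\<in>I. 1 / real (card I))"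
    by (intro sum.cong refl measure_box)
  then have sum_le: "(\<Sum>i\<in>I. measure lebesgue (cbox (lo i) (hi i))) \<le> measure lebesgue (\<Union>i\<in>I. cbox (lo i) (hi i))"
    using \<open>card I > 0\<close> by (simp add: cover measure_lebesgue_cbox_cart)
  have "interior (cbox (lo i) (hi i)) \<inter> interior (cbox (lo j) (hi j)) = {}"
    if "i \<in> I" "j \<in> I" "i \<noteq> j" for i j
  proof -
    have "cbox (lo i) (hi i) \<inter> cbox (lo j) (hi j) \<in> lmeasurable"
      by (intro fmeasurable_Int_fmeasurable) auto
    then have "negligible (cbox (lo i) (hi i) \<inter> cbox (lo j) (hi j))"
      using measure_Int_eq_0_if_sum_measure_le[OF \<open>finite I\<close> _ sum_le that]
      by (simp only: negligible_iff_measure0 lmeasurable_cbox)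
    then show ?thesis
      by (rule interior_Int_interior_eq_empty_if_negligible)
  qed
  moreover have "emeasure lebesgue (cbox (lo i) (hi i)) > 0" if "i \<in> I" for i
    using measure_box[OF that] \<open>card I > 0\<close> by (simp add: emeasure_eq_measure2)
  ultimately show "is_partition I (\<lambda>i. cbox (lo i) (hi i)) (cbox 0 1)"
    using \<open>finite I\<close> \<open>I \<noteq> {}\<close> cover by (simp add: is_partition_def)
  show "is_equivolume I (\<lambda>i. cbox (lo i) (hi i))"
    unfolding is_equivolume_def by (metis measure_box)
  show "is_convex_partition I (\<lambda>i. cbox (lo i) (hi i))"
    by (simp add: is_convex_partition_def)
qed

lemma mean_L2_disc_sq_equal_box_partition:
  fixes lo hi :: "'i \<Rightarrow> real^'n::finite"
  assumes part: "equal_box_partition I lo hi"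
  shows "mean_L2_disc_sq I (\<lambda>i. cbox (lo i) (hi i)) =
           (\<integral>x. (\<Prod>k\<in>UNIV. x$k) \<partial>lebesgue_on (cbox 0 (1::real^'n))) / real (card I)
           - (\<Sum>i\<in>I. box_cdf_sq_integral (lo i) (hi i)) / (real (card I))\<^sup>2"
proof -
  let ?L = "lebesgue_on (cbox 0 (1::real^'n))"
  let ?\<Omega> = "\<lambda>i. cbox (lo i) (hi i)"
  define N where "N = real (card I)"
  define p where "p i x = (\<Prod>k\<in>UNIV. interval_cdf (lo i $ k) (hi i $ k) (x$k))" for i x
  note props = equal_box_partitionD[OF part]
  have "finite I" and box: "\<And>i k. i \<in> I \<Longrightarrow> 0 \<le> lo i $ k \<and> lo i $ k < hi i $ k \<and> hi i $ k \<le> 1"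
    using part by (auto simp: equal_box_partition_def)
  interpret L: finite_measure ?L
    by (simp add: finite_measure_lebesgue_on)
  have cdf: "stratum_cdf ?\<Omega> i x = p i x" if "i \<in> I" for i x
    unfolding p_def using box[OF that] by (intro stratum_cdf_cbox) auto
  have int_prod: "integrable ?L (\<lambda>x. \<Prod>k\<in>UNIV. x$k)"
  proof (rule L.integrable_const_bound[where B=1])
    have "\<bar>\<Prod>k\<in>UNIV. x$k\<bar> \<le> 1" if "x \<in> cbox 0 1" for x :: "real^'n"
      using prod_nth_unit_cube[OF that] by (simp add: abs_of_nonneg)
    then show "AE x in ?L. norm (\<Prod>k\<in>UNIV. x$k) \<le> 1"
      by (intro AE_I2) simp
    show "(\<lambda>x. \<Prod>k\<in>UNIV. x$k) \<in> borel_measurable ?L"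
      by (intro measurable_restrict_space1) measurable
  qed
  have int_p: "integrable ?L (\<lambda>x. (p i x)\<^sup>2)" if "i \<in> I" for i
  proof (rule L.integrable_const_bound[where B=1])
    have "0 \<le> p i x \<and> p i x \<le> 1" for x
      unfolding p_def using box[OF that]
      by (auto intro!: prod_nonneg prod_le_1 interval_cdf_nonneg interval_cdf_le_1)
    then show "AE x in ?L. norm ((p i x)\<^sup>2) \<le> 1"
      by (simp add: abs_square_le_1)
    show "(\<lambda>x. (p i x)\<^sup>2) \<in> borel_measurable ?L"
      unfolding p_def by (intro measurable_restrict_space1) measurable
  qed
  have "mean_L2_disc_sq I ?\<Omega> = (\<integral>x. (N * (\<Prod>k\<in>UNIV. x$k) - (\<Sum>i\<in>I. (p i x)\<^sup>2)) / N\<^sup>2 \<partial>?L)"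
    unfolding mean_L2_disc_sq_convex_equivolume[OF props]
  proof (intro Bochner_Integration.integral_cong refl)
    fix x :: "real^'n" assume "x \<in> space ?L"
    then have "(\<Sum>i\<in>I. p i x) = N * (\<Prod>k\<in>UNIV. x$k)"
      using sum_stratum_cdf_convex_equivolume[OF props] cdf by (simp add: N_def)
    then show "(\<Sum>i\<in>I. stratum_cdf ?\<Omega> i x * (1 - stratum_cdf ?\<Omega> i x)) / (real (card I))\<^sup>2 =
        (N * (\<Prod>k\<in>UNIV. x$k) - (\<Sum>i\<in>I. (p i x)\<^sup>2)) / N\<^sup>2"
      by (simp add: cdf N_def algebra_simps power2_eq_square sum_subtractf)
  qed
  also have "\<dots> = (N * (\<integral>x. (\<Prod>k\<in>UNIV. x$k) \<partial>?L) - (\<Sum>i\<in>I. \<integral>x. (p i x)\<^sup>2 \<partial>?L)) / N\<^sup>2"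
    using int_prod int_p by (simp add: Bochner_Integration.integral_sum Bochner_Integration.integrable_sum)
  also have "(\<Sum>i\<in>I. \<integral>x. (p i x)\<^sup>2 \<partial>?L) = (\<Sum>i\<in>I. box_cdf_sq_integral (lo i) (hi i))"
    unfolding p_def using box by (intro sum.cong refl integral_sq_prod_interval_cdf) auto
  finally show ?thesis
    using props(1) by (simp add: N_def power2_eq_square diff_divide_distrib is_partition_def card_gt_0_iff)
qed

section \<open>The jittered partition and a better one\<close>

definition jitter_lo :: "nat \<Rightarrow> ('n::finite \<Rightarrow> nat) \<Rightarrow> real^'n" where
  "jitter_lo m j = (\<chi> k. (real (j k) - 1) / real m)"

definition jitter_hi :: "nat \<Rightarrow> ('n::finite \<Rightarrow> nat) \<Rightarrow> real^'n" where
  "jitter_hi m j = (\<chi> k. real (j k) / real m)"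

lemma jitter_lo_nth[simp]: "jitter_lo m j $ k = (real (j k) - 1) / real m"
  by (simp add: jitter_lo_def)

lemma jitter_hi_nth[simp]: "jitter_hi m j $ k = real (j k) / real m"
  by (simp add: jitter_hi_def)

lemma jittered_eq_cbox: "jittered m = (\<lambda>j. cbox (jitter_lo m j) (jitter_hi m j))"
  by (simp add: fun_eq_iff jittered_def jitter_lo_def jitter_hi_def)

lemma card_jitter_index: "card (jitter_index m :: ('n::finite \<Rightarrow> nat) set) = m ^ CARD('n)"
  by (simp add: jitter_index_def card_PiE)

lemma finite_jitter_index: "finite (jitter_index m :: ('n::finite \<Rightarrow> nat) set)"
  by (simp add: jitter_index_def finite_PiE)

lemma mem_jitter_index: "j \<in> jitter_index m \<longleftrightarrow> (\<forall>k. 1 \<le> j k \<and> j k \<le> m)"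
  by (auto simp: jitter_index_def PiE_def extensional_def)

lemma jittered_cover:
  assumes "m > 0"
  shows "(\<Union>j\<in>jitter_index m. cbox (jitter_lo m j) (jitter_hi m j)) = cbox 0 (1::real^'n::finite)"
proof
  show "(\<Union>j\<in>jitter_index m. cbox (jitter_lo m j) (jitter_hi m j)) \<subseteq> cbox 0 (1::real^'n)"
  proof
    fix x :: "real^'n" assume "x \<in> (\<Union>j\<in>jitter_index m. cbox (jitter_lo m j) (jitter_hi m j))"
    then obtain j where "\<forall>k. 1 \<le> j k \<and> j k \<le> m" "x \<in> cbox (jitter_lo m j) (jitter_hi m j)"
      by (auto simp: mem_jitter_index)
    then have "0 \<le> (real (j k) - 1) / m \<and> (real (j k) - 1) / m \<le> x $ k \<and> x $ k \<le> real (j k) / m \<and> real (j k) / m \<le> 1" for k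
      using assms by (auto simp: mem_box_cart)
    then show "x \<in> cbox 0 1"
      by (auto simp: mem_box_cart intro: order_trans)
  qed
  show "cbox 0 (1::real^'n) \<subseteq> (\<Union>j\<in>jitter_index m. cbox (jitter_lo m j) (jitter_hi m j))"
  proof
    fix x :: "real^'n" assume x: "x \<in> cbox 0 1"
    define j where "j k = max 1 (nat \<lceil>real m * x $ k\<rceil>)" for k
    have "0 \<le> x $ k" "x $ k \<le> 1" for k
      using x by (simp_all add: mem_box_cart)
    then have "real m * x $ k \<le> real m" for k
      using assms by (simp add: mult_left_le)
    then have "j \<in> jitter_index m"
      using assms by (auto simp: j_def mem_jitter_index ceiling_le_iff nat_le_iff)
    have lower: "real (j k) - 1 \<le> real m * x $ k" for k
    proof (cases "\<lceil>real m * x $ k\<rceil> \<le> 1")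
      case True
      then show ?thesis
        using \<open>0 \<le> x $ k\<close> by (auto simp: j_def)
    next
      case False
      then show ?thesis
        by (auto simp: j_def)
    qed
    have upper: "real m * x $ k \<le> real (j k)" for k
      by (auto simp: j_def) linarith
    have "x \<in> cbox (jitter_lo m j) (jitter_hi m j)"
      using assms lower upper by (simp add: mem_box_cart divide_le_eq le_divide_eq mult.commute)
    with \<open>j \<in> jitter_index m\<close> show "x \<in> (\<Union>j\<in>jitter_index m. cbox (jitter_lo m j) (jitter_hi m j))"
      by blast
  qed
qed

lemma equal_box_partition_jittered:
  assumes "m > 0"
  shows "equal_box_partition (jitter_index m :: ('n::finite \<Rightarrow> nat) set) (jitter_lo m) (jitter_hi m)"
  using assms jittered_cover[OF assms]
  by (auto intro!: divide_right_mono
      simp: equal_box_partition_def finite_jitter_index card_jitter_index mem_jitter_index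
        divide_strict_right_mono diff_divide_distrib power_one_over)

definition corner_index :: "'n \<Rightarrow> 'n \<Rightarrow> nat \<Rightarrow> nat \<Rightarrow> ('n \<Rightarrow> nat)" where
  "corner_index k1 k2 a b = (\<lambda>k. if k = k1 then a else if k = k2 then b else 1)"

definition corner_vec :: "'n::finite \<Rightarrow> 'n \<Rightarrow> real \<Rightarrow> real \<Rightarrow> real \<Rightarrow> real^'n" where
  "corner_vec k1 k2 a b c = (\<chi> k. if k = k1 then a else if k = k2 then b else c)"

lemma corner_vec_nth[simp]: "corner_vec k1 k2 a b c $ k = (if k = k1 then a else if k = k2 then b else c)"
  by (simp add: corner_vec_def)

definition corner_block :: "nat \<Rightarrow> 'n \<Rightarrow> 'n \<Rightarrow> ('n \<Rightarrow> nat) set" where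
  "corner_block m k1 k2 =
     {corner_index k1 k2 1 (m-1), corner_index k1 k2 1 m, corner_index k1 k2 2 m, corner_index k1 k2 2 (m-1)}"

text \<open>In the coordinate plane of \<open>k1, k2\<close> the corner block \<open>[0, 2/m] \<times> [1 - 2/m, 1]\<close> of four jittered
  cubes (all other coordinates in \<open>[0, 1/m]\<close>) is recut into four boxes of the same volume:
  \<open>[0, 4/(3m)] \<times> [1 - 2/m, 1 - 5/(4m)]\<close>, \<open>[0, 4/(3m)] \<times> [1 - 5/(4m), 1 - 1/(2m)]\<close>,
  \<open>[0, 2/m] \<times> [1 - 1/(2m), 1]\<close> and \<open>[4/(3m), 2/m] \<times> [1 - 2/m, 1 - 1/(2m)]\<close>.\<close>

definition modified_lo :: "nat \<Rightarrow> 'n::finite \<Rightarrow> 'n \<Rightarrow> ('n \<Rightarrow> nat) \<Rightarrow> real^'n" where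
  "modified_lo m k1 k2 j =
    (if j = corner_index k1 k2 1 (m-1) then corner_vec k1 k2 0 (1 - 2/m) 0
     else if j = corner_index k1 k2 1 m then corner_vec k1 k2 0 (1 - 5/(4*m)) 0
     else if j = corner_index k1 k2 2 m then corner_vec k1 k2 0 (1 - 1/(2*m)) 0
     else if j = corner_index k1 k2 2 (m-1) then corner_vec k1 k2 (4/(3*m)) (1 - 2/m) 0
     else jitter_lo m j)"

definition modified_hi :: "nat \<Rightarrow> 'n::finite \<Rightarrow> 'n \<Rightarrow> ('n \<Rightarrow> nat) \<Rightarrow> real^'n" where
  "modified_hi m k1 k2 j =
    (if j = corner_index k1 k2 1 (m-1) then corner_vec k1 k2 (4/(3*m)) (1 - 5/(4*m)) (1/m)
     else if j = corner_index k1 k2 1 m then corner_vec k1 k2 (4/(3*m)) (1 - 1/(2*m)) (1/m)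
     else if j = corner_index k1 k2 2 m then corner_vec k1 k2 (2/m) 1 (1/m)
     else if j = corner_index k1 k2 2 (m-1) then corner_vec k1 k2 (2/m) (1 - 1/(2*m)) (1/m)
     else jitter_hi m j)"

lemma prod_corner_vec:
  fixes F :: "real \<Rightarrow> real \<Rightarrow> real" and k1 k2 :: "'n::finite"
  assumes "k1 \<noteq> k2"
  shows "(\<Prod>k\<in>UNIV. F (corner_vec k1 k2 a b c $ k) (corner_vec k1 k2 a' b' c' $ k))
       = F a a' * F b b' * F c c' ^ (CARD('n) - 2)"
proof -
  have U: "(UNIV::'n set) = insert k1 (insert k2 (UNIV - {k1, k2}))"
    by auto
  have "(\<Prod>k\<in>UNIV. F (corner_vec k1 k2 a b c $ k) (corner_vec k1 k2 a' b' c' $ k))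
      = F a a' * (F b b' * (\<Prod>k\<in>UNIV - {k1, k2}. F c c'))"
    using assms by (subst U) (simp add: prod.insert)
  moreover have "card (UNIV - {k1, k2} :: 'n set) = CARD('n) - 2"
    using assms by (simp add: card_Diff_subset)
  ultimately show ?thesis
    by (simp add: mult.assoc)
qed

context
  fixes m :: nat and k1 k2 :: "'n::finite"
  assumes m2: "m \<ge> 2" and k12: "k1 \<noteq> k2"
begin

lemma corner_index_eq_iff: "corner_index k1 k2 a b = corner_index k1 k2 a' b' \<longleftrightarrow> a = a' \<and> b = b'"
  using k12 by (auto simp: corner_index_def fun_eq_iff)

lemma corner_block_cases:
  assumes "j \<in> corner_block m k1 k2"
  obtains "j = corner_index k1 k2 1 (m-1)" | "j = corner_index k1 k2 1 m"
    | "j = corner_index k1 k2 2 m" | "j = corner_index k1 k2 2 (m-1)"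
  using assms by (auto simp: corner_block_def)

lemma modified_lo_simps:
  "modified_lo m k1 k2 (corner_index k1 k2 1 (m-1)) = corner_vec k1 k2 0 (1 - 2/m) 0"
  "modified_lo m k1 k2 (corner_index k1 k2 1 m) = corner_vec k1 k2 0 (1 - 5/(4*m)) 0"
  "modified_lo m k1 k2 (corner_index k1 k2 2 m) = corner_vec k1 k2 0 (1 - 1/(2*m)) 0"
  "modified_lo m k1 k2 (corner_index k1 k2 2 (m-1)) = corner_vec k1 k2 (4/(3*m)) (1 - 2/m) 0"
  "j \<notin> corner_block m k1 k2 \<Longrightarrow> modified_lo m k1 k2 j = jitter_lo m j"
  using m2 by (auto simp: modified_lo_def corner_block_def corner_index_eq_iff)

lemma modified_hi_simps:
  "modified_hi m k1 k2 (corner_index k1 k2 1 (m-1)) = corner_vec k1 k2 (4/(3*m)) (1 - 5/(4*m)) (1/m)"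
  "modified_hi m k1 k2 (corner_index k1 k2 1 m) = corner_vec k1 k2 (4/(3*m)) (1 - 1/(2*m)) (1/m)"
  "modified_hi m k1 k2 (corner_index k1 k2 2 m) = corner_vec k1 k2 (2/m) 1 (1/m)"
  "modified_hi m k1 k2 (corner_index k1 k2 2 (m-1)) = corner_vec k1 k2 (2/m) (1 - 1/(2*m)) (1/m)"
  "j \<notin> corner_block m k1 k2 \<Longrightarrow> modified_hi m k1 k2 j = jitter_hi m j"
  using m2 by (auto simp: modified_hi_def corner_block_def corner_index_eq_iff)

lemma corner_block_subset: "corner_block m k1 k2 \<subseteq> jitter_index m"
  using m2 by (auto simp: corner_block_def mem_jitter_index corner_index_def)

lemma jitter_lo_corner_index: "jitter_lo m (corner_index k1 k2 a b) = corner_vec k1 k2 ((real a - 1) / m) ((real b - 1) / m) 0"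
  by (simp add: vec_eq_iff corner_index_def)

lemma jitter_hi_corner_index: "jitter_hi m (corner_index k1 k2 a b) = corner_vec k1 k2 (real a / m) (real b / m) (1 / m)"
  by (simp add: vec_eq_iff corner_index_def)

lemma modified_box_bounds:
  assumes "j \<in> jitter_index m"
  shows "0 \<le> modified_lo m k1 k2 j $ k \<and> modified_lo m k1 k2 j $ k < modified_hi m k1 k2 j $ k
    \<and> modified_hi m k1 k2 j $ k \<le> 1"
proof (cases "j \<in> corner_block m k1 k2")
  case True
  then show ?thesis
    by (cases rule: corner_block_cases; simp only: modified_lo_simps modified_hi_simps)
      (use m2 in \<open>auto simp: field_simps\<close>)
next
  case False
  then show ?thesis
    using assms m2 by (auto simp: modified_lo_simps modified_hi_simps mem_jitter_index divide_le_eq_1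
        intro!: divide_strict_right_mono)
qed

lemma modified_box_volume:
  "(\<Prod>k\<in>UNIV. modified_hi m k1 k2 j $ k - modified_lo m k1 k2 j $ k) = 1 / real (m ^ CARD('n))"
proof (cases "j \<in> corner_block m k1 k2")
  case True
  have "CARD('n) = 2 + (CARD('n) - 2)"
    using card_mono[of UNIV "{k1, k2}"] k12 by simp
  then have vol: "1 / real (m ^ CARD('n)) = (1 / real m) ^ 2 * (1 / real m) ^ (CARD('n) - 2)"
    by (metis power_add power_one_over of_nat_power)
  from True show ?thesis
    unfolding vol
    by (cases rule: corner_block_cases;
        simp only: modified_lo_simps modified_hi_simps prod_corner_vec[OF k12, where F = "\<lambda>x y. y - x"])
      (use m2 in \<open>simp_all add: field_simps power2_eq_square\<close>)
next
  case False
  then show ?thesis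
    using m2 by (simp add: modified_lo_simps modified_hi_simps diff_divide_distrib power_one_over)
qed

lemma mem_cbox_corner_vec:
  "x \<in> cbox (corner_vec k1 k2 a b c) (corner_vec k1 k2 a' b' c') \<longleftrightarrow>
     a \<le> x$k1 \<and> x$k1 \<le> a' \<and> b \<le> x$k2 \<and> x$k2 \<le> b' \<and> (\<forall>k. k \<noteq> k1 \<longrightarrow> k \<noteq> k2 \<longrightarrow> c \<le> x$k \<and> x$k \<le> c')"
proof -
  have split_k1_k2: "(\<forall>k. P k) \<longleftrightarrow> P k1 \<and> P k2 \<and> (\<forall>k. k \<noteq> k1 \<longrightarrow> k \<noteq> k2 \<longrightarrow> P k)" for P :: "'n \<Rightarrow> bool"
    by auto
  show ?thesis
    using k12 unfolding mem_box_cart by (subst split_k1_k2) simp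
qed

lemma corner_cube_bounds:
  assumes "j \<in> corner_block m k1 k2" "x \<in> cbox (jitter_lo m j) (jitter_hi m j)"
  shows "0 \<le> x$k1 \<and> x$k1 \<le> 2/m \<and> 1 - 2/m \<le> x$k2 \<and> x$k2 \<le> 1
    \<and> (\<forall>k. k \<noteq> k1 \<longrightarrow> k \<noteq> k2 \<longrightarrow> 0 \<le> x$k \<and> x$k \<le> 1/m)"
proof -
  obtain a b where "a \<in> {1, 2}" "b \<in> {m - 1, m}" and j: "j = corner_index k1 k2 a b"
    using assms(1) by (auto simp: corner_block_def)
  then have "0 \<le> (real a - 1) / m \<and> real a / m \<le> 2 / m \<and> 1 - 2 / m \<le> (real b - 1) / m \<and> real b / m \<le> 1"
    using m2 by (auto simp: field_simps of_nat_diff)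
  with assms(2) show ?thesis
    unfolding j jitter_lo_corner_index jitter_hi_corner_index mem_cbox_corner_vec by (meson order_trans)
qed

lemma corner_block_cover:
  assumes "j \<in> corner_block m k1 k2" "x \<in> cbox (jitter_lo m j) (jitter_hi m j)"
  shows "\<exists>j'\<in>corner_block m k1 k2. x \<in> cbox (modified_lo m k1 k2 j') (modified_hi m k1 k2 j')"
proof -
  note bounds = corner_cube_bounds[OF assms]
  have "1 - 5/(4*m) \<le> 1 - 1/(2*m)"
    using m2 by (simp add: field_simps)
  consider "1 - 1/(2*m) \<le> x$k2"
    | "x$k2 < 1 - 1/(2*m)" "4/(3*m) \<le> x$k1"
    | "x$k2 \<le> 1 - 5/(4*m)" "x$k1 < 4/(3*m)"
    | "1 - 5/(4*m) < x$k2" "x$k2 < 1 - 1/(2*m)" "x$k1 < 4/(3*m)"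
    by linarith
  then show ?thesis
  proof cases
    case 1
    then have "x \<in> cbox (modified_lo m k1 k2 (corner_index k1 k2 2 m)) (modified_hi m k1 k2 (corner_index k1 k2 2 m))"
      unfolding modified_lo_simps modified_hi_simps mem_cbox_corner_vec using bounds by simp
    then show ?thesis
      by (auto simp: corner_block_def)
  next
    case 2
    then have "x \<in> cbox (modified_lo m k1 k2 (corner_index k1 k2 2 (m-1))) (modified_hi m k1 k2 (corner_index k1 k2 2 (m-1)))"
      unfolding modified_lo_simps modified_hi_simps mem_cbox_corner_vec using bounds by simp
    then show ?thesis
      by (auto simp: corner_block_def)
  next
    case 3
    then have "x \<in> cbox (modified_lo m k1 k2 (corner_index k1 k2 1 (m-1))) (modified_hi m k1 k2 (corner_index k1 k2 1 (m-1)))"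
      unfolding modified_lo_simps modified_hi_simps mem_cbox_corner_vec
      using bounds \<open>1 - 5/(4*m) \<le> 1 - 1/(2*m)\<close> by simp
    then show ?thesis
      by (auto simp: corner_block_def)
  next
    case 4
    then have "x \<in> cbox (modified_lo m k1 k2 (corner_index k1 k2 1 m)) (modified_hi m k1 k2 (corner_index k1 k2 1 m))"
      unfolding modified_lo_simps modified_hi_simps mem_cbox_corner_vec using bounds by simp
    then show ?thesis
      by (auto simp: corner_block_def)
  qed
qed

lemma modified_cover:
  "(\<Union>j\<in>jitter_index m. cbox (modified_lo m k1 k2 j) (modified_hi m k1 k2 j)) = cbox 0 (1::real^'n)"
proof
  show "(\<Union>j\<in>jitter_index m. cbox (modified_lo m k1 k2 j) (modified_hi m k1 k2 j)) \<subseteq> cbox 0 1"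
    using modified_box_bounds by (auto simp: mem_box_cart) (meson order_trans)+
  show "cbox 0 1 \<subseteq> (\<Union>j\<in>jitter_index m. cbox (modified_lo m k1 k2 j) (modified_hi m k1 k2 j))"
  proof
    fix x :: "real^'n" assume "x \<in> cbox 0 1"
    then obtain j where j: "j \<in> jitter_index m" and x: "x \<in> cbox (jitter_lo m j) (jitter_hi m j)"
      using jittered_cover[of m] m2 by auto
    show "x \<in> (\<Union>j\<in>jitter_index m. cbox (modified_lo m k1 k2 j) (modified_hi m k1 k2 j))"
    proof (cases "j \<in> corner_block m k1 k2")
      case True
      then show ?thesis
        using corner_block_cover[OF True x] corner_block_subset by blast
    next
      case False
      then show ?thesis
        using j x by (metis UN_iff modified_lo_simps(5) modified_hi_simps(5))
    qed
  qed
qed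

lemma equal_box_partition_modified:
  "equal_box_partition (jitter_index m) (modified_lo m k1 k2) (modified_hi m k1 k2)"
  using modified_box_bounds modified_box_volume modified_cover
  by (simp add: equal_box_partition_def finite_jitter_index card_jitter_index)

lemma box_cdf_sq_integral_corner_vec:
  "box_cdf_sq_integral (corner_vec k1 k2 a b c) (corner_vec k1 k2 a' b' c') =
     cdf_sq_integral a a' * cdf_sq_integral b b' * cdf_sq_integral c c' ^ (CARD('n) - 2)"
  unfolding box_cdf_sq_integral_def by (rule prod_corner_vec[OF k12])

lemma sum_box_cdf_sq_integral_modified_gt:
  "(\<Sum>j\<in>(jitter_index m :: ('n \<Rightarrow> nat) set). box_cdf_sq_integral (jitter_lo m j) (jitter_hi m j))
     < (\<Sum>j\<in>jitter_index m. box_cdf_sq_integral (modified_lo m k1 k2 j) (modified_hi m k1 k2 j))"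
proof -
  let ?J = "jitter_index m :: ('n \<Rightarrow> nat) set"
  let ?G = cdf_sq_integral
  define f where "f j = box_cdf_sq_integral (modified_lo m k1 k2 j) (modified_hi m k1 k2 j)
      - box_cdf_sq_integral (jitter_lo m j) (jitter_hi m j)" for j
  have "(\<Sum>j\<in>?J. f j) = (\<Sum>j\<in>?J - corner_block m k1 k2. f j) + (\<Sum>j\<in>corner_block m k1 k2. f j)"
    using corner_block_subset finite_jitter_index by (rule sum.subset_diff)
  also have "(\<Sum>j\<in>?J - corner_block m k1 k2. f j) = 0"
    by (rule sum.neutral) (simp add: f_def modified_lo_simps(5) modified_hi_simps(5))
  also have "(\<Sum>j\<in>corner_block m k1 k2. f j) = f (corner_index k1 k2 1 (m-1)) + f (corner_index k1 k2 1 m)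
      + f (corner_index k1 k2 2 m) + f (corner_index k1 k2 2 (m-1))"
    using m2 unfolding corner_block_def by (simp add: corner_index_eq_iff add.assoc)
  also have "\<dots> = ?G 0 (1/m) ^ (CARD('n) - 2) *
       ((?G 0 (4/(3*m)) * ?G (1-2/m) (1-5/(4*m)) + ?G 0 (4/(3*m)) * ?G (1-5/(4*m)) (1-1/(2*m))
        + ?G 0 (2/m) * ?G (1-1/(2*m)) 1 + ?G (4/(3*m)) (2/m) * ?G (1-2/m) (1-1/(2*m)))
       - (?G 0 (1/m) * ?G ((real m-2)/m) ((real m-1)/m) + ?G 0 (1/m) * ?G ((real m-1)/m) (real m/m)
        + ?G (1/m) (2/m) * ?G ((real m-2)/m) ((real m-1)/m) + ?G (1/m) (2/m) * ?G ((real m-1)/m) (real m/m)))"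
    unfolding f_def modified_lo_simps modified_hi_simps jitter_lo_corner_index jitter_hi_corner_index
      box_cdf_sq_integral_corner_vec
    using m2 by (simp add: of_nat_diff algebra_simps diff_divide_distrib)
  also have "\<dots> = ?G 0 (1/m) ^ (CARD('n) - 2) * ((3 * real m - 4) / (36 * (real m)\<^sup>2))"
    using m2 by (simp add: cdf_sq_integral_def field_simps power2_eq_square)
  finally have "(\<Sum>j\<in>?J. f j) = ?G 0 (1/m) ^ (CARD('n) - 2) * ((3 * real m - 4) / (36 * (real m)\<^sup>2))"
    by simp
  moreover have "?G 0 (1/m) ^ (CARD('n) - 2) * ((3 * real m - 4) / (36 * (real m)\<^sup>2)) > 0"
    using m2 by (intro mult_pos_pos zero_less_power) (simp_all add: cdf_sq_integral_def field_simps)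
  ultimately show ?thesis
    by (simp add: f_def sum_subtractf)
qed

end

theorem theorem1:
  fixes m :: nat
  assumes "CARD('n::finite) \<ge> 2" and "m \<ge> 2"
  shows "\<exists>\<Omega> :: nat \<Rightarrow> (real^'n) set.
           is_partition {..<m ^ CARD('n)} \<Omega> (cbox 0 1) \<and>
           is_equivolume {..<m ^ CARD('n)} \<Omega> \<and>
           is_convex_partition {..<m ^ CARD('n)} \<Omega> \<and>
           mean_L2_disc_sq {..<m ^ CARD('n)} \<Omega>
             < mean_L2_disc_sq (jitter_index m :: ('n \<Rightarrow> nat) set) (jittered m)"
proof -
  let ?J = "jitter_index m :: ('n \<Rightarrow> nat) set"
  define N where "N = m ^ CARD('n)"
  have "\<exists>k1 k2 :: 'n. k1 \<noteq> k2"
    using assms(1) card_le_Suc0_iff_eq[of "UNIV :: 'n set"] by auto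
  then obtain k1 k2 :: 'n where "k1 \<noteq> k2"
    by blast
  obtain e where e: "bij_betw e {..<N} ?J"
    using ex_bij_betw_nat_finite[OF finite_jitter_index] by (auto simp: card_jitter_index N_def atLeast0LessThan)
  define lo hi where "lo = modified_lo m k1 k2 \<circ> e" and "hi = modified_hi m k1 k2 \<circ> e"
  have new: "equal_box_partition {..<N} lo hi"
    unfolding lo_def hi_def
    by (rule equal_box_partition_reindex[OF equal_box_partition_modified[OF assms(2) \<open>k1 \<noteq> k2\<close>] e])
  have jit: "equal_box_partition ?J (jitter_lo m) (jitter_hi m)"
    using assms(2) by (intro equal_box_partition_jittered) simp
  have "(\<Sum>i<N. box_cdf_sq_integral (lo i) (hi i))
      = (\<Sum>j\<in>?J. box_cdf_sq_integral (modified_lo m k1 k2 j) (modified_hi m k1 k2 j))"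
    unfolding lo_def hi_def using sum.reindex_bij_betw[OF e] by simp
  then have "mean_L2_disc_sq {..<N} (\<lambda>i. cbox (lo i) (hi i)) < mean_L2_disc_sq ?J (jittered m)"
    using mean_L2_disc_sq_equal_box_partition[OF new] mean_L2_disc_sq_equal_box_partition[OF jit]
      sum_box_cdf_sq_integral_modified_gt[OF assms(2) \<open>k1 \<noteq> k2\<close>] assms(2)
    by (simp add: jittered_eq_cbox card_jitter_index N_def divide_strict_right_mono)
  then show ?thesis
    using equal_box_partitionD[OF new] unfolding N_def by blast
qed

end
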